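(* Let $\square$ be a subcomplex of $I^n$, and let $S^k$ be a subcomplex of $\square$ isomorphic to $\partial I^{k+1}$, with $k\geq 1$. Then $S^k$ is a face-like subcomplex of $\square$ if and only if $S^k$ is not the boundary of a $(k+1)$-dimensional face of $\square$, i.e. $S^k\neq\partial\hat F$ for every $F\in\square$.
   Context: A cubical complex consists of a finite vertex set $V$ and a collection $\square$ of nonempty subsets of $V$ (faces) such that: every singleton is a face; for each face $F$ the poset $\hat F=\{G\in\square : G\subseteq F\}$ is isomorphic to the poset of nonempty faces of a cube (of dimension $\dim F$); and the intersection of two faces is empty or a face. $I^n$ is the $n$-cube as a cubical complex: vertex set $\{0,1\}^n$, faces indexed by $\{0,1,*\}^n$ (the face $(p_i)$ is the set of $x$ with $x_i=p_i$ whenever $p_i\ne *$). $\partial I^{m}$ is $I^m$ with the top face $( *,\dots,* )$ removed; for a face $F$, $\partial\hat F=\hat F\setminus\{F\}$. A subcomplex is a subset of vertices and faces forming a cubical complex; isomorphism means a vertex bijection mapping faces to faces in both directions. A subcomplex $\Gamma$ of $\square$ is face-like if for every face $F\in\square$, $F\cap V(\Gamma)$ is empty or a face of $\Gamma$. *)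

theory Defs
  imports Main
begin

text \<open>Vertices of the cube I^n: boolean lists of length n.
  A face is indexed by p :: bool option list (None plays the role of *).\<close>

definition cube_vertices :: "nat \<Rightarrow> bool list set" where
  "cube_vertices n = {x. length x = n}"

definition cube_face :: "bool option list \<Rightarrow> bool list set" where
  "cube_face p = {x. length x = length p \<and> (\<forall>i<length p. p ! i \<noteq> None \<longrightarrow> x ! i = the (p ! i))}"

definition cube_faces :: "nat \<Rightarrow> bool list set set" where
  "cube_faces n = cube_face ` {p. length p = n}"

definition bd_cube_faces :: "nat \<Rightarrow> bool list set set" where
  "bd_cube_faces m = cube_faces m - {cube_face (replicate m None)}"

definition poset_iso :: "'a set set \<Rightarrow> 'b set set \<Rightarrow> bool" where
  "poset_iso A B \<longleftrightarrow> (\<exists>f. bij_betw f A B \<and> (\<forall>G\<in>A. \<forall>H\<in>A. G \<subseteq> H \<longleftrightarrow> f G \<subseteq> f H))"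

definition faces_below :: "'a set set \<Rightarrow> 'a set \<Rightarrow> 'a set set" where
  "faces_below C F = {G \<in> C. G \<subseteq> F}"

definition bd_faces_below :: "'a set set \<Rightarrow> 'a set \<Rightarrow> 'a set set" where
  "bd_faces_below C F = faces_below C F - {F}"

definition cubical_complex :: "'a set \<Rightarrow> 'a set set \<Rightarrow> bool" where
  "cubical_complex V C \<longleftrightarrow>
     finite V \<and> (\<forall>F\<in>C. F \<noteq> {} \<and> F \<subseteq> V) \<and>
     (\<forall>v\<in>V. {v} \<in> C) \<and>
     (\<forall>F\<in>C. \<exists>m. poset_iso (faces_below C F) (cube_faces m)) \<and>
     (\<forall>F\<in>C. \<forall>G\<in>C. F \<inter> G = {} \<or> F \<inter> G \<in> C)"

definition subcomplex :: "'a set \<Rightarrow> 'a set set \<Rightarrow> 'a set \<Rightarrow> 'a set set \<Rightarrow> bool" where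
  "subcomplex V' C' V C \<longleftrightarrow> V' \<subseteq> V \<and> C' \<subseteq> C \<and> cubical_complex V' C'"

definition complex_iso :: "'a set \<Rightarrow> 'a set set \<Rightarrow> 'b set \<Rightarrow> 'b set set \<Rightarrow> bool" where
  "complex_iso V C W D \<longleftrightarrow>
     (\<exists>\<phi>. bij_betw \<phi> V W \<and> (\<forall>F. F \<subseteq> V \<longrightarrow> (F \<in> C \<longleftrightarrow> \<phi> ` F \<in> D)))"

definition face_like :: "'a set \<Rightarrow> 'a set set \<Rightarrow> 'a set \<Rightarrow> 'a set set \<Rightarrow> bool" where
  "face_like V' C' V C \<longleftrightarrow> subcomplex V' C' V C \<and>
     (\<forall>F\<in>C. F \<inter> V' = {} \<or> F \<inter> V' \<in> C')"

end

theory Submission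
  imports Defs
begin

text \<open>Let the sphere be given by an isomorphism from the boundary of I^(k+1), k \<ge> 1. Every edge
  of that boundary is a face of the sphere, hence a face of I^n, so the vertex bijection maps edges
  to edges of I^n. Since the images of the corners of a square of I^(k+1) again form a square, parallel
  edges are mapped to edges along the same coordinate; it follows that the vertex set of the sphere
  is a (k+1)-dimensional face P of I^n, and counting shows that the faces of the sphere are exactly
  the proper faces of P. A face G of the complex meets P in a face of I^n. If that is a proper face
  of P, it is a face of the sphere. Otherwise G contains P, and then P itself is a face of the complex
  (by counting, a face of a subcomplex of I^n carries all its subcubes), so that the sphere is the
  boundary of P.\<close>

definition flip :: "bool list \<Rightarrow> nat \<Rightarrow> bool list" where
  "flip x a = x[a := \<not> x ! a]"

lemma length_flip [simp]: "length (flip x a) = length x"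
  by (simp add: flip_def)

lemma nth_flip: "a < length x \<Longrightarrow> flip x a ! j = (if j = a then \<not> x ! a else x ! j)"
  by (simp add: flip_def nth_list_update)

lemma flip_flip [simp]: "a < length x \<Longrightarrow> flip (flip x a) a = x"
  by (rule nth_equalityI) (auto simp: nth_flip)

lemma flip_neq: "a < length x \<Longrightarrow> flip x a \<noteq> x"
  by (metis nth_flip)

lemma flip_commute: "a < length x \<Longrightarrow> b < length x \<Longrightarrow> flip (flip x a) b = flip (flip x b) a"
  by (rule nth_equalityI) (auto simp: nth_flip)

lemma flip_eq_flip_iff: "a < length x \<Longrightarrow> b < length x \<Longrightarrow> flip x a = flip x b \<longleftrightarrow> a = b"
  by (metis nth_flip)

lemma flip_flip_eq_self_iff:
  "a < length x \<Longrightarrow> b < length x \<Longrightarrow> flip (flip x a) b = x \<longleftrightarrow> a = b"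
  by (metis flip_flip flip_eq_flip_iff length_flip)

lemma flip_flip_eq_flip_flip:
  assumes "a < length x" "b < length x" "c < length x" "d < length x" "a \<noteq> b" "a \<noteq> c"
    and eq: "flip (flip x a) b = flip (flip x c) d"
  shows "d = a \<and> c = b"
proof -
  have "flip (flip x a) b ! a = flip (flip x c) d ! a" "flip (flip x a) b ! b = flip (flip x c) d ! b"
    using eq by simp_all
  then show ?thesis
    using assms(1-6) by (auto simp: nth_flip split: if_splits)
qed

subsection \<open>Faces of the cube\<close>

definition cube_dim :: "bool option list \<Rightarrow> nat" where
  "cube_dim p = length (filter (\<lambda>e. e = None) p)"

lemma cube_dim_simps [simp]:
  "cube_dim [] = 0"
  "cube_dim (e # p) = (if e = None then Suc (cube_dim p) else cube_dim p)"
  by (auto simp: cube_dim_def)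

lemma cube_dim_eq_card: "cube_dim p = card {i. i < length p \<and> p ! i = None}"
  by (simp add: cube_dim_def length_filter_conv_card)

lemma cube_dim_replicate_None [simp]: "cube_dim (replicate m None) = m"
  by (induction m) auto

definition refinements :: "bool option list \<Rightarrow> bool option list set" where
  "refinements p = {q. length q = length p \<and> (\<forall>i<length p. p ! i \<noteq> None \<longrightarrow> q ! i = p ! i)}"

lemma cube_face_Cons:
  "cube_face (e # p) = (\<lambda>(c, x). c # x) ` ({c. e \<noteq> None \<longrightarrow> c = the e} \<times> cube_face p)"
proof (rule set_eqI)
  fix y
  show "y \<in> cube_face (e # p) \<longleftrightarrow> y \<in> (\<lambda>(c, x). c # x) ` ({c. e \<noteq> None \<longrightarrow> c = the e} \<times> cube_face p)"
    by (cases y) (auto simp: cube_face_def All_less_Suc2)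
qed

lemma refinements_Cons:
  "refinements (e # p) = (\<lambda>(c, q). c # q) ` ({c. e \<noteq> None \<longrightarrow> c = e} \<times> refinements p)"
proof (rule set_eqI)
  fix y
  show "y \<in> refinements (e # p) \<longleftrightarrow> y \<in> (\<lambda>(c, q). c # q) ` ({c. e \<noteq> None \<longrightarrow> c = e} \<times> refinements p)"
    by (cases y) (auto simp: refinements_def All_less_Suc2)
qed

lemma inj_on_Cons_pair: "inj_on (\<lambda>(c, x). c # x) A"
  by (auto simp: inj_on_def)

lemma card_cube_face: "card (cube_face p) = 2 ^ cube_dim p"
proof (induction p)
  case Nil
  have "cube_face [] = {[]}" by (auto simp: cube_face_def)
  then show ?case by simp
next
  case (Cons e p)
  have "card {c. e \<noteq> None \<longrightarrow> c = the e} = (if e = None then 2 else 1)"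
    by (cases e) auto
  then show ?case
    using Cons by (simp add: cube_face_Cons card_image[OF inj_on_Cons_pair] card_cartesian_product)
qed

lemma cube_face_nonempty: "cube_face p \<noteq> {}"
  using card_cube_face[of p] by (metis card.empty power_not_zero zero_neq_numeral)

lemma card_refinements: "card (refinements p) = 3 ^ cube_dim p"
proof (induction p)
  case Nil
  have "refinements [] = {[]}" by (auto simp: refinements_def)
  then show ?case by simp
next
  case (Cons e p)
  have "card (UNIV :: bool option set) = 3"
    by (simp add: UNIV_option_conv card_image)
  then have "card {c. e \<noteq> None \<longrightarrow> c = e} = (if e = None then 3 else 1)"
    by (cases e) auto
  then show ?case
    using Cons by (simp add: refinements_Cons card_image[OF inj_on_Cons_pair] card_cartesian_product)
qed

lemma finite_refinements: "finite (refinements p)"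
  using card_refinements[of p] by (metis card.infinite power_not_zero zero_neq_numeral)

lemma cube_face_subset_iff:
  assumes "length q = length p"
  shows "cube_face q \<subseteq> cube_face p \<longleftrightarrow> q \<in> refinements p"
proof
  assume sub: "cube_face q \<subseteq> cube_face p"
  show "q \<in> refinements p" unfolding refinements_def
  proof (safe)
    show "length q = length p" by fact
    fix i y assume i: "i < length p" and py: "p ! i = Some y"
    \<comment> \<open>otherwise the vertex of q with all free coordinates set to \<not> y escapes\<close>
    define x where "x = map (\<lambda>e. case e of None \<Rightarrow> \<not> y | Some c \<Rightarrow> c) q"
    have "x \<in> cube_face q" by (auto simp: x_def cube_face_def)
    then have "x \<in> cube_face p" using sub by blast
    then have "x ! i = y" using i py by (auto simp: cube_face_def)
    then show "q ! i = p ! i" using py i assms by (cases "q ! i") (auto simp: x_def)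
  qed
next
  assume "q \<in> refinements p"
  then have qp: "q ! i = p ! i" if "i < length p" "p ! i \<noteq> None" for i
    using that by (simp add: refinements_def)
  show "cube_face q \<subseteq> cube_face p"
  proof
    fix x assume "x \<in> cube_face q"
    then have "length x = length p" and "\<And>i. i < length p \<Longrightarrow> q ! i \<noteq> None \<Longrightarrow> x ! i = the (q ! i)"
      using assms by (auto simp: cube_face_def)
    then show "x \<in> cube_face p"
      using qp by (auto simp: cube_face_def)
  qed
qed

lemma refinementsD: "q \<in> refinements p \<Longrightarrow> i < length p \<Longrightarrow> p ! i \<noteq> None \<Longrightarrow> q ! i = p ! i"
  by (simp add: refinements_def)

lemma cube_face_inject:
  assumes len: "length q = length p" and eq: "cube_face q = cube_face p"
  shows "q = p"
proof (rule nth_equalityI)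
  have qp: "q \<in> refinements p" and pq: "p \<in> refinements q"
    using cube_face_subset_iff[OF len] cube_face_subset_iff[OF len[symmetric]] eq by blast+
  fix i assume "i < length q"
  then show "q ! i = p ! i"
    using refinementsD[OF qp, of i] refinementsD[OF pq, of i] len by metis
qed (rule len)

lemma cube_faces_below_cube_face:
  assumes "length p = n"
  shows "{H \<in> cube_faces n. H \<subseteq> cube_face p} = cube_face ` refinements p"
  using assms cube_face_subset_iff by (auto simp: cube_faces_def refinements_def)

lemma card_cube_faces_below_cube_face:
  assumes "length p = n"
  shows "card {H \<in> cube_faces n. H \<subseteq> cube_face p} = 3 ^ cube_dim p"
proof -
  have "inj_on cube_face (refinements p)"
    by (rule inj_onI) (auto simp: refinements_def intro: cube_face_inject)
  then show ?thesis
    by (simp add: cube_faces_below_cube_face[OF assms] card_image card_refinements)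
qed

lemma finite_cube_faces_below_cube_face:
  "length p = n \<Longrightarrow> finite {H \<in> cube_faces n. H \<subseteq> cube_face p}"
  by (simp add: cube_faces_below_cube_face finite_refinements)

lemma cube_vertices_eq_cube_face: "cube_vertices m = cube_face (replicate m None)"
  by (auto simp: cube_vertices_def cube_face_def)

lemma cube_faces_eq_faces_below_top:
  "cube_faces m = {H \<in> cube_faces m. H \<subseteq> cube_face (replicate m None)}"
  by (auto simp: cube_faces_def cube_face_def)

lemma card_cube_faces: "card (cube_faces m) = 3 ^ m"
  by (subst cube_faces_eq_faces_below_top)
    (simp add: card_cube_faces_below_cube_face)

lemma finite_cube_faces: "finite (cube_faces m)"
  by (subst cube_faces_eq_faces_below_top)
    (simp add: finite_cube_faces_below_cube_face)

lemma card_bd_cube_faces: "card (bd_cube_faces m) = 3 ^ m - 1"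
proof -
  have "cube_face (replicate m None) \<in> cube_faces m" by (simp add: cube_faces_def)
  then show ?thesis
    by (simp add: bd_cube_faces_def card_Diff_singleton finite_cube_faces card_cube_faces)
qed

lemma card_cube_faces_strictly_below_cube_face:
  assumes "length p = n"
  shows "card {H \<in> cube_faces n. H \<subset> cube_face p} = 3 ^ cube_dim p - 1"
proof -
  have "{H \<in> cube_faces n. H \<subset> cube_face p} = {H \<in> cube_faces n. H \<subseteq> cube_face p} - {cube_face p}"
    by auto
  moreover have "cube_face p \<in> cube_faces n" using assms by (simp add: cube_faces_def)
  ultimately show ?thesis
    using assms by (simp add: card_cube_faces_below_cube_face finite_cube_faces_below_cube_face)
qed

lemma bd_cube_faces_subset_cube_vertices: "B \<in> bd_cube_faces m \<Longrightarrow> B \<subseteq> cube_vertices m"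
  by (auto simp: bd_cube_faces_def cube_faces_def cube_face_def cube_vertices_def)

lemma cube_face_Int:
  assumes p: "length p = n" and q: "length q = n" and meet: "cube_face p \<inter> cube_face q \<noteq> {}"
  shows "cube_face p \<inter> cube_face q \<in> cube_faces n"
proof -
  define r where "r = map (\<lambda>i. if p ! i = None then q ! i else p ! i) [0..<n]"
  from meet obtain x where x: "x \<in> cube_face p" "x \<in> cube_face q" by blast
  have rp: "r ! i = p ! i" if "i < n" "p ! i \<noteq> None" for i
    using that by (auto simp: r_def)
  have rq: "r ! i = q ! i" if "i < n" "q ! i \<noteq> None" for i
  proof (cases "p ! i = None")
    case False
    then have "the (p ! i) = the (q ! i)"
      using x that p q by (auto simp: cube_face_def)
    then have "p ! i = q ! i" using False that(2) by (intro option.expand) auto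
    then show ?thesis using rp False that(1) by simp
  qed (use that in \<open>simp add: r_def\<close>)
  have "cube_face p \<inter> cube_face q = cube_face r"
  proof (intro set_eqI iffI)
    fix y assume "y \<in> cube_face p \<inter> cube_face q"
    then show "y \<in> cube_face r" using p q by (auto simp: cube_face_def r_def)
  next
    fix y assume "y \<in> cube_face r"
    then have "length y = n" and "\<And>i. i < n \<Longrightarrow> r ! i \<noteq> None \<Longrightarrow> y ! i = the (r ! i)"
      by (auto simp: cube_face_def r_def)
    then show "y \<in> cube_face p \<inter> cube_face q"
      using p q rp rq by (auto simp: cube_face_def)
  qed
  then show ?thesis by (auto simp: cube_faces_def r_def)
qed

lemma cube_face_map_Some: "cube_face (map Some v) = {v}"
  by (auto simp: cube_face_def intro: nth_equalityI)

lemma cube_face_edge: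
  assumes "length u = m" "i < m"
  shows "cube_face ((map Some u)[i := None]) = {u, flip u i}"
proof (intro set_eqI iffI)
  fix x assume x: "x \<in> cube_face ((map Some u)[i := None])"
  then have len: "length x = m" and agree: "\<And>j. j < m \<Longrightarrow> j \<noteq> i \<Longrightarrow> x ! j = u ! j"
    using assms by (auto simp: cube_face_def nth_list_update)
  show "x \<in> {u, flip u i}"
  proof (cases "x ! i = u ! i")
    case True
    then have "x = u" using len agree assms by (intro nth_equalityI) (simp, metis)
    then show ?thesis by simp
  next
    case False
    then have "x = flip u i" using len agree assms by (intro nth_equalityI) (auto simp: nth_flip)
    then show ?thesis by simp
  qed
qed (use assms in \<open>auto simp: cube_face_def nth_list_update nth_flip\<close>)

lemma cube_face_doubleton:
  assumes face: "cube_face q = {x, y}" and "x \<noteq> y"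
  shows "\<exists>a<length q. y = flip x a"
proof -
  have x: "x \<in> cube_face q" and y: "y \<in> cube_face q" using face by auto
  then have lx: "length x = length q" and ly: "length y = length q" by (auto simp: cube_face_def)
  obtain a where a: "a < length q" "x ! a \<noteq> y ! a"
    using \<open>x \<noteq> y\<close> lx ly nth_equalityI[of x y] by auto
  then have "q ! a = None"
    using x y by (cases "q ! a") (force simp: cube_face_def)+
  then have "flip x a \<in> cube_face q" using x a lx
    by (auto simp: cube_face_def nth_flip)
  moreover have "flip x a \<noteq> x" using a lx flip_neq by simp
  ultimately show ?thesis using face a by auto
qed

lemma flip_in_cube_vertices [simp]: "flip u i \<in> cube_vertices m \<longleftrightarrow> u \<in> cube_vertices m"
  by (simp add: cube_vertices_def)

lemma edge_in_bd_cube_faces: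
  assumes "u \<in> cube_vertices m" "i < m" "2 \<le> m"
  shows "{u, flip u i} \<in> bd_cube_faces m"
proof -
  have u: "length u = m" using assms(1) by (simp add: cube_vertices_def)
  have "card {u, flip u i} = 2" using flip_neq[of i u] u assms(2) by auto
  moreover have "card (cube_face (replicate m None)) \<noteq> 2"
  proof -
    have "(2::nat) ^ 1 < 2 ^ m" using assms(3) by (intro power_strict_increasing) auto
    then show ?thesis by (simp add: card_cube_face)
  qed
  ultimately have "{u, flip u i} \<noteq> cube_face (replicate m None)" by metis
  moreover have "cube_face ((map Some u)[i := None]) \<in> cube_faces m"
    using u by (simp add: cube_faces_def)
  then have "{u, flip u i} \<in> cube_faces m"
    by (simp add: cube_face_edge[OF u assms(2)])
  ultimately show ?thesis by (simp add: bd_cube_faces_def)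
qed

subsection \<open>Subcomplexes of the cube\<close>

definition minimals :: "'a set set \<Rightarrow> 'a set set" where
  "minimals A = {M \<in> A. \<forall>N\<in>A. N \<subseteq> M \<longrightarrow> N = M}"

lemma poset_iso_card_minimals:
  assumes "poset_iso A B"
  shows "card (minimals A) = card (minimals B)"
proof -
  obtain f where bij: "bij_betw f A B" and mono: "\<And>G H. G \<in> A \<Longrightarrow> H \<in> A \<Longrightarrow> G \<subseteq> H \<longleftrightarrow> f G \<subseteq> f H"
    using assms by (auto simp: poset_iso_def)
  have "M \<in> minimals A \<longleftrightarrow> f M \<in> minimals B" if M: "M \<in> A" for M
  proof -
    have "(\<forall>N\<in>A. N \<subseteq> M \<longrightarrow> N = M) \<longleftrightarrow> (\<forall>N\<in>A. f N \<subseteq> f M \<longrightarrow> f N = f M)"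
      using M mono bij by (metis bij_betw_iff_bijections)
    also have "\<dots> \<longleftrightarrow> (\<forall>N'\<in>B. N' \<subseteq> f M \<longrightarrow> N' = f M)"
      using bij by (auto simp: bij_betw_def)
    finally show ?thesis using M bij by (simp add: minimals_def bij_betw_apply)
  qed
  moreover have "minimals A \<subseteq> A" "minimals B \<subseteq> f ` A"
    using bij by (auto simp: minimals_def bij_betw_def)
  ultimately have "f ` minimals A = minimals B" by blast
  then show ?thesis
    using bij_betw_subset[OF bij \<open>minimals A \<subseteq> A\<close>] bij_betw_same_card by blast
qed

lemma minimals_eq_singletons:
  assumes faces: "\<And>M. M \<in> A \<Longrightarrow> M \<noteq> {} \<and> M \<subseteq> U" and points: "\<And>v. v \<in> U \<Longrightarrow> {v} \<in> A"
  shows "minimals A = (\<lambda>v. {v}) ` U"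
proof (intro equalityI subsetI)
  fix M assume M: "M \<in> minimals A"
  then have "M \<in> A" by (simp add: minimals_def)
  then obtain v where v: "v \<in> M" "v \<in> U" using faces by blast
  then have "{v} = M" using M points[of v] by (simp add: minimals_def)
  with v show "M \<in> (\<lambda>v. {v}) ` U" by blast
next
  fix M assume "M \<in> (\<lambda>v. {v}) ` U"
  then obtain v where "v \<in> U" "M = {v}" by blast
  moreover have "N = {v}" if "N \<in> A" "N \<subseteq> {v}" for N
    using faces[OF that(1)] that(2) by (simp add: subset_singleton_iff)
  ultimately show "M \<in> minimals A" using points by (simp add: minimals_def)
qed

lemma card_minimals_cube_faces: "card (minimals (cube_faces m)) = 2 ^ m"
proof -
  have "minimals (cube_faces m) = (\<lambda>v. {v}) ` cube_vertices m"
  proof (rule minimals_eq_singletons)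
    show "M \<noteq> {} \<and> M \<subseteq> cube_vertices m" if "M \<in> cube_faces m" for M
    proof -
      from that obtain q where "length q = m" "M = cube_face q" by (auto simp: cube_faces_def)
      then show ?thesis using cube_face_nonempty[of q] by (auto simp: cube_vertices_def cube_face_def)
    qed
    show "{v} \<in> cube_faces m" if "v \<in> cube_vertices m" for v
      using that by (auto simp: cube_faces_def cube_vertices_def simp flip: cube_face_map_Some)
  qed
  then show ?thesis
    by (simp add: card_image cube_vertices_eq_cube_face card_cube_face)
qed

text \<open>The face poset below G is that of a cube with as many vertices as G, so it has as many
  members as there are subcubes of G in I^n; being among them, it contains all of them.\<close>

lemma faces_below_cube_subcomplex:
  assumes cc: "cubical_complex V C" and C: "C \<subseteq> cube_faces n" and G: "G \<in> C"
  shows "faces_below C G = {H \<in> cube_faces n. H \<subseteq> G}"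
proof -
  obtain p where p: "length p = n" "G = cube_face p" using G C by (auto simp: cube_faces_def)
  obtain m where iso: "poset_iso (faces_below C G) (cube_faces m)"
    using cc G by (auto simp: cubical_complex_def)
  have "minimals (faces_below C G) = (\<lambda>v. {v}) ` G"
    by (rule minimals_eq_singletons) (use cc G in \<open>auto simp: cubical_complex_def faces_below_def\<close>)
  then have "(2::nat) ^ cube_dim p = 2 ^ m"
    using poset_iso_card_minimals[OF iso] p by (simp add: card_image card_cube_face card_minimals_cube_faces)
  then have "m = cube_dim p" by simp
  moreover have "card (faces_below C G) = card (cube_faces m)"
    using iso bij_betw_same_card by (auto simp: poset_iso_def)
  ultimately have "card (faces_below C G) = card {H \<in> cube_faces n. H \<subseteq> G}"
    using p by (simp add: card_cube_faces card_cube_faces_below_cube_face)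
  moreover have "faces_below C G \<subseteq> {H \<in> cube_faces n. H \<subseteq> G}"
    using C by (auto simp: faces_below_def)
  ultimately show ?thesis
    using card_subset_eq finite_cube_faces_below_cube_face p by metis
qed

lemma bd_faces_below_cube_subcomplex:
  assumes "cubical_complex V C" "C \<subseteq> cube_faces n" "G \<in> C"
  shows "bd_faces_below C G = {H \<in> cube_faces n. H \<subset> G}"
  using faces_below_cube_subcomplex[OF assms] by (auto simp: bd_faces_below_def)

subsection \<open>Edge-preserving maps of cube vertices\<close>

lemma cube_vertices_induct [consumes 1, case_names zero flip]:
  assumes "u \<in> cube_vertices m"
    and zero: "P (replicate m False)"
    and flip: "\<And>u s. u \<in> cube_vertices m \<Longrightarrow> s < m \<Longrightarrow> \<not> u ! s \<Longrightarrow> P u \<Longrightarrow> P (flip u s)"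
  shows "P u"
  using assms(1)
proof (induction "card {j. j < m \<and> u ! j}" arbitrary: u rule: less_induct)
  case less
  show ?case
  proof (cases "\<exists>s<m. u ! s")
    case True
    then obtain s where s: "s < m" "u ! s" by blast
    have len: "length u = m" using less.prems by (simp add: cube_vertices_def)
    have "{j. j < m \<and> flip u s ! j} = {j. j < m \<and> u ! j} - {s}"
      using s len by (auto simp: nth_flip)
    then have "card {j. j < m \<and> flip u s ! j} < card {j. j < m \<and> u ! j}"
      using s by (metis (mono_tags, lifting) card_Diff1_less finite_nat_set_iff_bounded mem_Collect_eq)
    then have "P (flip u s)" using less by simp
    moreover have "\<not> flip u s ! s" using s len by (simp add: nth_flip)
    ultimately have "P (flip (flip u s) s)" using flip less.prems s by simp
    then show ?thesis using s len by simp
  next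
    case False
    then have "u = replicate m False"
      using less.prems by (auto simp: cube_vertices_def intro: nth_equalityI)
    then show ?thesis using zero by simp
  qed
qed

locale cube_edge_map =
  fixes \<psi> :: "bool list \<Rightarrow> bool list" and m n :: nat
  assumes inj: "inj_on \<psi> (cube_vertices m)"
    and length_map: "u \<in> cube_vertices m \<Longrightarrow> length (\<psi> u) = n"
    and edge: "u \<in> cube_vertices m \<Longrightarrow> i < m \<Longrightarrow> \<exists>a<n. \<psi> (flip u i) = flip (\<psi> u) a"
begin

definition dir :: "bool list \<Rightarrow> nat \<Rightarrow> nat" where
  "dir u i = (THE a. a < n \<and> \<psi> (flip u i) = flip (\<psi> u) a)"

lemma dir:
  assumes u: "u \<in> cube_vertices m" and i: "i < m"
  shows "dir u i < n" "\<psi> (flip u i) = flip (\<psi> u) (dir u i)"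
proof -
  have "\<exists>!a. a < n \<and> \<psi> (flip u i) = flip (\<psi> u) a"
    using edge[OF u i] flip_eq_flip_iff length_map[OF u] by metis
  then have "dir u i < n \<and> \<psi> (flip u i) = flip (\<psi> u) (dir u i)"
    unfolding dir_def by (rule theI')
  then show "dir u i < n" "\<psi> (flip u i) = flip (\<psi> u) (dir u i)" by simp_all
qed

lemma map_eq_map_iff: "u \<in> cube_vertices m \<Longrightarrow> v \<in> cube_vertices m \<Longrightarrow> \<psi> u = \<psi> v \<longleftrightarrow> u = v"
  using inj by (auto simp: inj_on_def)

text \<open>Parallel edges of a square are mapped to parallel edges: the images of the four corners
  form a square of the target cube.\<close>

lemma dir_flip:
  assumes u: "u \<in> cube_vertices m" and i: "i < m" and j: "j < m"
  shows "dir (flip u j) i = dir u i"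
proof -
  have lu: "length u = m" and lpsi: "length (\<psi> u) = n"
    using u length_map by (auto simp: cube_vertices_def)
  define a b c d where defs: "a = dir u i" "b = dir (flip u i) j" "c = dir u j" "d = dir (flip u j) i"
  have abcd: "a < n" "b < n" "c < n" "d < n"
    using dir u i j by (simp_all add: defs)
  have ia: "\<psi> (flip u i) = flip (\<psi> u) a" and jc: "\<psi> (flip u j) = flip (\<psi> u) c"
    using dir u i j by (simp_all add: defs)
  have iab: "\<psi> (flip (flip u i) j) = flip (flip (\<psi> u) a) b"
    using dir(2)[of "flip u i" j] ia u j by (simp add: defs)
  have jcd: "\<psi> (flip (flip u j) i) = flip (flip (\<psi> u) c) d"
    using dir(2)[of "flip u j" i] jc u i by (simp add: defs)
  show ?thesis
  proof (cases "i = j")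
    case True
    have "flip (flip (\<psi> u) a) d = \<psi> u"
      using jcd True ia u i lu by (simp add: defs)
    then show ?thesis using abcd lpsi flip_flip_eq_self_iff by (simp add: defs)
  next
    case False
    have "a \<noteq> b"
    proof
      assume "a = b"
      then have "\<psi> (flip (flip u i) j) = \<psi> u" using iab abcd lpsi by simp
      then have "flip (flip u i) j = u" using map_eq_map_iff u by simp
      then show False using False flip_flip_eq_self_iff lu i j by simp
    qed
    moreover have "a \<noteq> c"
    proof
      assume "a = c"
      then have "\<psi> (flip u i) = \<psi> (flip u j)" using ia jc by simp
      then have "flip u i = flip u j" using map_eq_map_iff u by simp
      then show False using False flip_eq_flip_iff lu i j by simp
    qed
    moreover have "flip (flip (\<psi> u) a) b = flip (flip (\<psi> u) c) d"
      using iab jcd flip_commute lu i j by metis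
    ultimately have "d = a"
      using flip_flip_eq_flip_flip[of a "\<psi> u" b c d] abcd lpsi by simp
    then show ?thesis by (simp add: defs)
  qed
qed

definition base :: "bool list" where
  "base = \<psi> (replicate m False)"

definition axis :: "nat \<Rightarrow> nat" where
  "axis i = dir (replicate m False) i"

lemma replicate_False_in_cube_vertices: "replicate m False \<in> cube_vertices m"
  by (simp add: cube_vertices_def)

lemma length_base: "length base = n"
  by (simp add: base_def length_map replicate_False_in_cube_vertices)

lemma axis_less: "i < m \<Longrightarrow> axis i < n"
  by (simp add: axis_def dir replicate_False_in_cube_vertices)

lemma map_flip:
  assumes "u \<in> cube_vertices m" "i < m"
  shows "\<psi> (flip u i) = flip (\<psi> u) (axis i)"
proof -
  have "dir u i = axis i"
    using assms(1) by (induction rule: cube_vertices_induct) (simp_all add: axis_def dir_flip assms(2))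
  then show ?thesis using dir(2)[OF assms] by simp
qed

lemma inj_on_axis: "inj_on axis {..<m}"
proof (rule inj_onI, rule ccontr)
  fix i j assume "i \<in> {..<m}" "j \<in> {..<m}" "axis i = axis j" "i \<noteq> j"
  then have "\<psi> (flip (flip (replicate m False) i) j) = \<psi> (replicate m False)"
    using map_flip replicate_False_in_cube_vertices axis_less length_map
    by (simp add: base_def[symmetric] length_base)
  then have "flip (flip (replicate m False) i) j = replicate m False"
    using map_eq_map_iff replicate_False_in_cube_vertices by simp
  with \<open>i \<noteq> j\<close> \<open>i \<in> {..<m}\<close> \<open>j \<in> {..<m}\<close> show False
    using flip_flip_eq_self_iff by simp
qed

lemma map_eq:
  assumes "u \<in> cube_vertices m"
  shows "\<psi> u = map (\<lambda>a. base ! a \<noteq> (\<exists>i<m. u ! i \<and> axis i = a)) [0..<n]"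
  using assms
proof (induction rule: cube_vertices_induct)
  case zero
  show ?case by (auto simp: base_def[symmetric] length_base list_eq_iff_nth_eq)
next
  case (flip u s)
  have lu: "length u = m" using flip.hyps(1) by (simp add: cube_vertices_def)
  have "(\<exists>i<m. flip u s ! i \<and> axis i = a) \<longleftrightarrow> (\<exists>i<m. u ! i \<and> axis i = a) \<noteq> (a = axis s)" for a
    using flip.hyps(2,3) lu inj_on_axis by (auto simp: nth_flip inj_on_def)
  moreover have "\<psi> (flip u s) ! a = (\<psi> u ! a \<noteq> (a = axis s))" if "a < n" for a
    using map_flip[OF flip.hyps(1,2)] length_map[OF flip.hyps(1)] axis_less[OF flip.hyps(2)]
    by (auto simp: nth_flip)
  ultimately show ?case
    using flip.IH length_map flip.hyps(1) by (intro nth_equalityI) auto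
qed

definition pattern :: "bool option list" where
  "pattern = map (\<lambda>a. if a \<in> axis ` {..<m} then None else Some (base ! a)) [0..<n]"

lemma length_pattern: "length pattern = n"
  by (simp add: pattern_def)

lemma cube_dim_pattern: "cube_dim pattern = m"
proof -
  have "{a. a < length pattern \<and> pattern ! a = None} = axis ` {..<m}"
    using axis_less by (auto simp: pattern_def split: if_splits)
  then show ?thesis
    using inj_on_axis by (simp add: cube_dim_eq_card card_image)
qed

lemma image_eq_cube_face: "\<psi> ` cube_vertices m = cube_face pattern"
proof (intro equalityI subsetI)
  fix y assume "y \<in> \<psi> ` cube_vertices m"
  then show "y \<in> cube_face pattern"
    using map_eq by (auto simp: cube_face_def pattern_def)
next
  fix y assume y: "y \<in> cube_face pattern"
  then have ly: "length y = n" and off_axis: "\<And>a. a < n \<Longrightarrow> a \<notin> axis ` {..<m} \<Longrightarrow> y ! a = base ! a"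
    by (auto simp: cube_face_def pattern_def)
  define u where "u = map (\<lambda>i. y ! axis i \<noteq> base ! axis i) [0..<m]"
  have u: "u \<in> cube_vertices m" by (simp add: u_def cube_vertices_def)
  have "(\<exists>i<m. u ! i \<and> axis i = a) \<longleftrightarrow> y ! a \<noteq> base ! a" if "a < n" for a
  proof (cases "a \<in> axis ` {..<m}")
    case True
    then obtain i where "i < m" "a = axis i" by blast
    with inj_on_axis show ?thesis by (auto simp: u_def inj_on_def)
  qed (use that off_axis in \<open>auto simp: u_def\<close>)
  then have "\<psi> u = y"
    using map_eq[OF u] ly by (intro nth_equalityI) auto
  with u show "y \<in> \<psi> ` cube_vertices m" by blast
qed

end

subsection \<open>Spheres in the cube\<close>

lemma image_inv_into_image:
  assumes "bij_betw \<phi> V W" "B \<subseteq> W"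
  shows "inv_into V \<phi> ` B \<subseteq> V" "\<phi> ` inv_into V \<phi> ` B = B"
  using assms by (auto simp: bij_betw_def intro: inv_into_into, metis image_inv_into_cancel)

lemma complex_iso_sym:
  assumes "complex_iso V C W D"
  shows "complex_iso W D V C"
proof -
  obtain \<phi> where bij: "bij_betw \<phi> V W" and faces: "\<And>F. F \<subseteq> V \<Longrightarrow> F \<in> C \<longleftrightarrow> \<phi> ` F \<in> D"
    using assms by (auto simp: complex_iso_def)
  have "B \<in> D \<longleftrightarrow> inv_into V \<phi> ` B \<in> C" if "B \<subseteq> W" for B
    using faces image_inv_into_image[OF bij that] by metis
  then show ?thesis
    using bij_betw_inv_into[OF bij] by (auto simp: complex_iso_def)
qed

lemma complex_iso_card_faces:
  assumes "complex_iso V C W D" "\<And>F. F \<in> C \<Longrightarrow> F \<subseteq> V" "\<And>B. B \<in> D \<Longrightarrow> B \<subseteq> W"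
  shows "card C = card D"
proof -
  obtain \<phi> where bij: "bij_betw \<phi> V W" and faces: "\<And>F. F \<subseteq> V \<Longrightarrow> F \<in> C \<longleftrightarrow> \<phi> ` F \<in> D"
    using assms(1) by (auto simp: complex_iso_def)
  have "inj_on ((`) \<phi>) C"
    using bij assms(2) by (auto simp: bij_betw_def inj_on_def inj_on_image_eq_iff)
  moreover have "(`) \<phi> ` C = D"
  proof (intro equalityI subsetI)
    fix B assume B: "B \<in> D"
    then show "B \<in> (`) \<phi> ` C"
      using faces image_inv_into_image[OF bij assms(3)[OF B]] by (metis image_eqI)
  qed (use faces assms(2) in blast)
  ultimately show ?thesis by (metis card_image)
qed

lemma bd_cube_in_cube_is_bd_face:
  assumes iso: "complex_iso VS CS (cube_vertices m) (bd_cube_faces m)" and m: "2 \<le> m"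
    and VS: "VS \<subseteq> cube_vertices n" and CS: "CS \<subseteq> cube_faces n" and CS_VS: "\<And>F. F \<in> CS \<Longrightarrow> F \<subseteq> VS"
  shows "\<exists>P. length P = n \<and> VS = cube_face P \<and> CS = {H \<in> cube_faces n. H \<subset> VS}"
proof -
  obtain \<psi> where bij: "bij_betw \<psi> (cube_vertices m) VS"
    and faces: "\<And>B. B \<subseteq> cube_vertices m \<Longrightarrow> B \<in> bd_cube_faces m \<longleftrightarrow> \<psi> ` B \<in> CS"
    using complex_iso_sym[OF iso] by (auto simp: complex_iso_def)
  have "cube_edge_map \<psi> m n"
  proof
    show inj: "inj_on \<psi> (cube_vertices m)" using bij by (simp add: bij_betw_def)
    show "length (\<psi> u) = n" if "u \<in> cube_vertices m" for u
      using that bij VS by (auto simp: bij_betw_def cube_vertices_def)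
    fix u i assume u: "u \<in> cube_vertices m" and i: "i < m"
    have "\<psi> ` {u, flip u i} \<in> CS"
      using faces edge_in_bd_cube_faces[OF u i m] bd_cube_faces_subset_cube_vertices by blast
    then obtain q where q: "length q = n" "cube_face q = {\<psi> u, \<psi> (flip u i)}"
      using CS by (auto simp: cube_faces_def)
    have "flip u i \<noteq> u" using u i flip_neq by (simp add: cube_vertices_def)
    then have "\<psi> u \<noteq> \<psi> (flip u i)" using inj u by (auto simp: inj_on_def)
    with q show "\<exists>a<n. \<psi> (flip u i) = flip (\<psi> u) a" using cube_face_doubleton by metis
  qed
  then obtain P where P: "length P = n" "cube_dim P = m" "VS = cube_face P"
    using bij cube_edge_map.image_eq_cube_face cube_edge_map.cube_dim_pattern
      cube_edge_map.length_pattern by (metis bij_betw_def)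
  have "cube_vertices m \<notin> bd_cube_faces m"
    by (simp add: bd_cube_faces_def cube_vertices_eq_cube_face)
  then have "VS \<notin> CS"
    using faces[of "cube_vertices m"] bij by (simp add: bij_betw_def)
  then have "CS \<subseteq> {H \<in> cube_faces n. H \<subset> VS}"
    using CS CS_VS by blast
  moreover have "card CS = card {H \<in> cube_faces n. H \<subset> VS}"
    using complex_iso_card_faces[OF iso CS_VS bd_cube_faces_subset_cube_vertices]
    by (simp add: card_bd_cube_faces card_cube_faces_strictly_below_cube_face P)
  ultimately have "CS = {H \<in> cube_faces n. H \<subset> VS}"
    using finite_cube_faces_below_cube_face[OF P(1)] P(3)
    by (metis (no_types, lifting) card_subset_eq finite_subset mem_Collect_eq psubset_imp_subset subsetI)
  with P show ?thesis by blast
qed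

lemma face_like_imp_not_bd_faces_below:
  assumes "face_like VS CS V C" "cubical_complex V C" "F \<in> C"
  shows "(VS, CS) \<noteq> (F, bd_faces_below C F)"
proof
  assume "(VS, CS) = (F, bd_faces_below C F)"
  then have "F \<inter> VS = F" "F \<notin> CS" by (auto simp: bd_faces_below_def)
  moreover have "F \<noteq> {}" using assms(2,3) by (auto simp: cubical_complex_def)
  ultimately show False using assms(1,3) by (auto simp: face_like_def)
qed

lemma face_like_if_not_bd_faces_below:
  assumes "subcomplex V C (cube_vertices n) (cube_faces n)" and "subcomplex VS CS V C"
    and iso: "complex_iso VS CS (cube_vertices m) (bd_cube_faces m)" and "2 \<le> m"
    and not_bd: "\<forall>F\<in>C. (VS, CS) \<noteq> (F, bd_faces_below C F)"
  shows "face_like VS CS V C"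
proof -
  have cc: "cubical_complex V C" and C: "C \<subseteq> cube_faces n"
    using assms(1) by (auto simp: subcomplex_def)
  have "VS \<subseteq> cube_vertices n" "CS \<subseteq> cube_faces n" "\<And>F. F \<in> CS \<Longrightarrow> F \<subseteq> VS"
    using assms(1,2) by (auto simp: subcomplex_def cubical_complex_def)
  then obtain P where P: "length P = n" "VS = cube_face P" and CS: "CS = {H \<in> cube_faces n. H \<subset> VS}"
    using bd_cube_in_cube_is_bd_face[OF iso \<open>2 \<le> m\<close>] by blast
  have "G \<inter> VS \<in> CS" if G: "G \<in> C" and meet: "G \<inter> VS \<noteq> {}" for G
  proof -
    obtain q where "length q = n" "G = cube_face q" using G C by (auto simp: cube_faces_def)
    then have face: "G \<inter> VS \<in> cube_faces n" using cube_face_Int P meet by simp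
    have "G \<inter> VS \<noteq> VS"
    proof
      assume "G \<inter> VS = VS"
      then have "VS \<in> C"
        using faces_below_cube_subcomplex[OF cc C G] face by (auto simp: faces_below_def)
      moreover have "CS = bd_faces_below C VS"
        using bd_faces_below_cube_subcomplex[OF cc C calculation] CS by simp
      ultimately show False using not_bd by blast
    qed
    with face CS show ?thesis by blast
  qed
  with assms(2) show ?thesis by (auto simp: face_like_def)
qed

theorem mainTheorem3:
  fixes n k :: nat and V VS :: "bool list set" and C CS :: "bool list set set"
  assumes "subcomplex V C (cube_vertices n) (cube_faces n)"
    and "subcomplex VS CS V C"
    and "complex_iso VS CS (cube_vertices (k + 1)) (bd_cube_faces (k + 1))"
    and "k \<ge> 1"
  shows "face_like VS CS V C \<longleftrightarrow> (\<forall>F\<in>C. (VS, CS) \<noteq> (F, bd_faces_below C F))"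
proof
  have "cubical_complex V C" using assms(1) by (simp add: subcomplex_def)
  then show "\<forall>F\<in>C. (VS, CS) \<noteq> (F, bd_faces_below C F)" if "face_like VS CS V C"
    using face_like_imp_not_bd_faces_below that by blast
  show "face_like VS CS V C" if "\<forall>F\<in>C. (VS, CS) \<noteq> (F, bd_faces_below C F)"
    using face_like_if_not_bd_faces_below[OF assms(1-3)] assms(4) that by simp
qed

end
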